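(* Let $G$ be a scheduling game on $m\ge2$ identical machines of speed $1$ with a global priority list, in which every job $i$ has negative deterioration $p_i(t)=\max\{\tau_i,b_i-a_it\}$ with $0\le a_i\le1$ (all jobs delay-averse). Then every pure Nash equilibrium $\sigma$ of $G$ satisfies $C_{\max}(\sigma)\le\left(3-\frac2m\right)OPT(G)$; i.e., $PoA({\cal G}^{-DA}_{PGlobal})\le 3-\frac2m$.
   Context: Scheduling game: a finite set $N$ of $n$ jobs (players) and a set $M$ of $m$ machines; machine $j$ has speed $s_j>0$. With a global priority list, all machines share the same bijection $\pi:N\to\{1,\dots,n\}$, and job $u$ has higher priority than $v$ iff $\pi(u)<\pi(v)$. Negative deterioration: $p_i(t)=\max\{\tau_i,b_i-a_it\}$ with $b_i,a_i\ge0$, $\tau_i>0$. A profile $\sigma\in M^N$ assigns each job to a machine. On machine $j$, the jobs assigned to it, listed in increasing $\pi$-order as $i_1,i_2,\dots$, are processed without idle time: $S_{i_1}(\sigma)=0$, $C_{i_k}(\sigma)=S_{i_k}(\sigma)+p_{i_k}(S_{i_k}(\sigma))/s_j$, $S_{i_{k+1}}(\sigma)=C_{i_k}(\sigma)$. The cost of job $i$ is $C_i(\sigma)$. A pure Nash equilibrium (NE) is a profile in which no job can strictly decrease its completion time by unilaterally changing its machine. Makespan $C_{\max}(\sigma)=\max_iC_i(\sigma)$; $OPT(G)=\min_\sigma C_{\max}(\sigma)$ over all profiles. ${\cal G}^{-DA}_{PGlobal}$ denotes the class of all games described in the claim; its PoA is the supremum over its games of $\max_{\sigma\text{ NE}}C_{\max}(\sigma)/OPT(G)$.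 *)

theory Defs
  imports Main "HOL-Library.FuncSet" Complex_Main
begin

definition proc :: "real \<Rightarrow> real \<Rightarrow> real \<Rightarrow> real \<Rightarrow> real" where
  "proc tau b a t = max tau (b - a * t)"

primrec run :: "('j \<Rightarrow> real \<Rightarrow> real) \<Rightarrow> real \<Rightarrow> 'j list \<Rightarrow> ('j \<times> real) list" where
  "run p t [] = []"
| "run p t (i # is) = (let c = t + p i t in (i, c) # run p c is)"

text \<open>Jobs of N assigned to machine j under profile sigma, in increasing priority order
  (prio is a bijection N -> {1..n}).\<close>
definition machine_jobs :: "'j set \<Rightarrow> ('j \<Rightarrow> nat) \<Rightarrow> ('j \<Rightarrow> 'm) \<Rightarrow> 'm \<Rightarrow> 'j list" where
  "machine_jobs N prio sigma j =
     filter (\<lambda>i. sigma i = j) (map (inv_into N prio) [1..<Suc (card N)])"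

definition compl :: "'j set \<Rightarrow> ('j \<Rightarrow> nat) \<Rightarrow> ('j \<Rightarrow> real) \<Rightarrow> ('j \<Rightarrow> real) \<Rightarrow> ('j \<Rightarrow> real)
                     \<Rightarrow> ('j \<Rightarrow> 'm) \<Rightarrow> 'j \<Rightarrow> real" where
  "compl N prio tau b a sigma i =
     the (map_of (run (\<lambda>k t. proc (tau k) (b k) (a k) t) 0 (machine_jobs N prio sigma (sigma i))) i)"

definition is_profile :: "'j set \<Rightarrow> 'm set \<Rightarrow> ('j \<Rightarrow> 'm) \<Rightarrow> bool" where
  "is_profile N M sigma \<longleftrightarrow> (\<forall>i\<in>N. sigma i \<in> M)"

definition is_NE :: "'j set \<Rightarrow> 'm set \<Rightarrow> ('j \<Rightarrow> nat) \<Rightarrow> ('j \<Rightarrow> real) \<Rightarrow> ('j \<Rightarrow> real)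
                     \<Rightarrow> ('j \<Rightarrow> real) \<Rightarrow> ('j \<Rightarrow> 'm) \<Rightarrow> bool" where
  "is_NE N M prio tau b a sigma \<longleftrightarrow> is_profile N M sigma \<and>
     (\<forall>i\<in>N. \<forall>j\<in>M. compl N prio tau b a sigma i \<le> compl N prio tau b a (sigma(i := j)) i)"

definition makespan :: "'j set \<Rightarrow> ('j \<Rightarrow> nat) \<Rightarrow> ('j \<Rightarrow> real) \<Rightarrow> ('j \<Rightarrow> real)
                     \<Rightarrow> ('j \<Rightarrow> real) \<Rightarrow> ('j \<Rightarrow> 'm) \<Rightarrow> real" where
  "makespan N prio tau b a sigma = Max (insert 0 (compl N prio tau b a sigma ` N))"

definition OPT :: "'j set \<Rightarrow> 'm set \<Rightarrow> ('j \<Rightarrow> nat) \<Rightarrow> ('j \<Rightarrow> real) \<Rightarrow> ('j \<Rightarrow> real)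
                     \<Rightarrow> ('j \<Rightarrow> real) \<Rightarrow> real" where
  "OPT N M prio tau b a = (INF sigma\<in>{sigma. is_profile N M sigma}. makespan N prio tau b a sigma)"

end

theory Submission
  imports Defs
begin

text \<open>
  Fix an equilibrium \<open>\<sigma>\<close>, an arbitrary profile \<open>\<sigma>'\<close> of makespan \<open>Z\<close> and a job \<open>k\<close>, and write
  \<open>p'\<^sub>x\<close> for the processing time of \<open>x\<close> in \<open>\<sigma>'\<close>. As \<open>a \<ge> 0\<close>, processing times do not grow
  with the start time; as \<open>a \<le> 1\<close>, completion times \<open>t + p(t)\<close> do not shrink.

  Let \<open>T\<^sub>j\<close> be the time at which \<open>k\<close> would start on machine \<open>j\<close>. Among the jobs ahead of \<open>k\<close>
  on \<open>j\<close>, the last one \<open>g\<close> that starts earlier than in \<open>\<sigma>'\<close> completes no later than in \<open>\<sigma>'\<close>,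
  and every job after \<open>g\<close> starts later, so it runs for at most its \<open>p'\<close>. The part up to \<open>g\<close> is
  bounded by \<open>Z\<close> on all machines but one: on a machine without such a \<open>g\<close> it vanishes, and
  otherwise, on the machine whose \<open>g\<close> has the highest priority, it is the total \<open>p'\<close> of the
  \<open>\<sigma>'\<close>-prefix of \<open>g\<close>, which is disjoint from all the later jobs. Hence
  \<open>\<Sum>\<^sub>j T\<^sub>j \<le> (m - 1) Z + \<Sum>\<^sub>x p'\<^sub>x - p'\<^sub>k\<close>,
  and \<open>\<Sum>\<^sub>x p'\<^sub>x \<le> m Z\<close> since every machine load of \<open>\<sigma>'\<close> is at most \<open>Z\<close>.

  On the machine \<open>j\<close> of least \<open>T\<^sub>j\<close> the equilibrium condition gives \<open>C\<^sub>k \<le> T\<^sub>j + p\<^sub>k(T\<^sub>j)\<close>.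
  If \<open>T\<^sub>j\<close> is before the \<open>\<sigma>'\<close>-start of \<open>k\<close> this is at most the \<open>\<sigma>'\<close>-completion time of \<open>k\<close>;
  otherwise it is at most \<open>T\<^sub>j + p'\<^sub>k \<le> (3 - 2/m) Z\<close> by the two sums.
\<close>

primrec finish :: "('j \<Rightarrow> real \<Rightarrow> real) \<Rightarrow> real \<Rightarrow> 'j list \<Rightarrow> real" where
  "finish p t [] = t"
| "finish p t (i # is) = finish p (t + p i t) is"

lemma finish_append: "finish p t (xs @ ys) = finish p (finish p t xs) ys"
  by (induction xs arbitrary: t) auto

lemma run_append: "run p t (xs @ ys) = run p t xs @ run p (finish p t xs) ys"
  by (induction xs arbitrary: t) (auto simp: Let_def)

lemma map_fst_run: "map fst (run p t xs) = xs"
  by (induction xs arbitrary: t) (auto simp: Let_def)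

lemma map_of_run_append_Cons:
  assumes "i \<notin> set xs"
  shows "map_of (run p t (xs @ i # ys)) i = Some (finish p t xs + p i (finish p t xs))"
proof -
  have "map_of (run p t xs) i = None"
    using assms by (simp add: map_of_eq_None_iff map_fst_run flip: set_map)
  then show ?thesis by (simp add: run_append map_add_def Let_def)
qed

lemma filter_sorted_split:
  assumes "sorted_wrt (\<lambda>x y. (prio :: 'j \<Rightarrow> nat) x < prio y) xs" "i \<in> set xs" "Q i"
  shows "filter Q xs =
    filter (\<lambda>x. Q x \<and> prio x < prio i) xs @ i # filter (\<lambda>x. Q x \<and> prio i < prio x) xs"
  using assms
proof (induction xs)
  case Nil
  then show ?case by simp
next
  case (Cons y xs)
  show ?case
  proof (cases "y = i")
    case True
    then have "filter (\<lambda>x. Q x \<and> prio x < prio i) xs = []"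
      "filter (\<lambda>x. Q x \<and> prio i < prio x) xs = filter Q xs"
      using Cons.prems(1) by (auto simp: filter_empty_conv intro!: filter_cong)
    then show ?thesis using True Cons.prems by simp
  next
    case False
    then have "i \<in> set xs" "prio y < prio i" using Cons.prems by auto
    then show ?thesis using Cons by auto
  qed
qed

lemma finish_eq_sum:
  assumes "sorted_wrt (\<lambda>x y. (prio :: 'j \<Rightarrow> nat) x < prio y) xs"
  shows "finish p t xs = t + (\<Sum>x\<in>set xs. p x (finish p t (filter (\<lambda>y. prio y < prio x) xs)))"
  using assms
proof (induction xs rule: rev_induct)
  case Nil
  then show ?case by simp
next
  case (snoc i xs)
  have sorted: "sorted_wrt (\<lambda>x y. prio x < prio y) xs" and less: "\<forall>x\<in>set xs. prio x < prio i"
    using snoc.prems by (auto simp: sorted_wrt_append)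
  then have "i \<notin> set xs" by auto
  moreover have "filter (\<lambda>y. prio y < prio i) (xs @ [i]) = xs"
    using less by (auto intro: filter_True)
  moreover have "filter (\<lambda>y. prio y < prio x) (xs @ [i]) = filter (\<lambda>y. prio y < prio x) xs"
    if "x \<in> set xs" for x
    using less that by auto
  ultimately show ?case using snoc.IH[OF sorted] by (simp add: finish_append sum.insert_if)
qed

lemma finish_le_reference_starts:
  assumes "sorted_wrt (\<lambda>x y. (prio :: 'j \<Rightarrow> nat) x < prio y) xs"
    and "\<And>x s t. x \<in> set xs \<Longrightarrow> s \<le> t \<Longrightarrow> p x t \<le> p x s"
    and "\<And>x s t. x \<in> set xs \<Longrightarrow> s \<le> t \<Longrightarrow> s + p x s \<le> t + p x t"
  shows "finish p 0 xs \<le> (\<Sum>x\<in>set xs. p x (S x)) \<or>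
    (\<exists>g\<in>set xs. finish p 0 xs \<le> S g + p g (S g) + (\<Sum>x\<in>{x\<in>set xs. prio g < prio x}. p x (S x)))"
  using assms
proof (induction xs rule: rev_induct)
  case Nil
  then show ?case by simp
next
  case (snoc i xs)
  have less: "\<forall>x\<in>set xs. prio x < prio i"
    using snoc.prems by (auto simp: sorted_wrt_append)
  then have "i \<notin> set xs" by auto
  define T where "T = finish p 0 xs"
  have finish_snoc: "finish p 0 (xs @ [i]) = T + p i T" by (simp add: finish_append T_def)
  show ?case
  proof (cases "T < S i")
    case True
    then have "T + p i T \<le> S i + p i (S i)" using snoc.prems(3)[of i T "S i"] by auto
    moreover have none_later: "{x\<in>set (xs @ [i]). prio i < prio x} = {}" using less by auto
    ultimately have "finish p 0 (xs @ [i]) \<le>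
      S i + p i (S i) + (\<Sum>x\<in>{x\<in>set (xs @ [i]). prio i < prio x}. p x (S x))"
      using finish_snoc by (simp only: none_later sum.empty)
    then show ?thesis by auto
  next
    case False
    then have later: "p i T \<le> p i (S i)" using snoc.prems(2)[of i "S i" T] by auto
    have "T \<le> (\<Sum>x\<in>set xs. p x (S x)) \<or>
      (\<exists>g\<in>set xs. T \<le> S g + p g (S g) + (\<Sum>x\<in>{x\<in>set xs. prio g < prio x}. p x (S x)))"
      using snoc by (auto simp: sorted_wrt_append T_def)
    then show ?thesis
    proof (elim disjE bexE)
      assume "T \<le> (\<Sum>x\<in>set xs. p x (S x))"
      then show ?thesis using finish_snoc later \<open>i \<notin> set xs\<close> by simp
    next
      fix g assume g: "g \<in> set xs"
        and T_le: "T \<le> S g + p g (S g) + (\<Sum>x\<in>{x\<in>set xs. prio g < prio x}. p x (S x))"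
      have "{x\<in>set (xs @ [i]). prio g < prio x} = insert i {x\<in>set xs. prio g < prio x}"
        using g less by auto
      then show ?thesis using g T_le finish_snoc later \<open>i \<notin> set xs\<close> by force
    qed
  qed
qed

lemma sum_le_by_disjoint_bounds:
  fixes f :: "'j \<Rightarrow> real" and T :: "'m \<Rightarrow> real" and \<sigma> :: "'j \<Rightarrow> 'm"
  assumes "finite M" "finite N" "j0 \<in> M"
    and nonneg: "\<And>x. x \<in> N \<Longrightarrow> 0 \<le> f x"
    and R: "\<And>j. j \<in> M \<Longrightarrow> R j \<subseteq> {x \<in> N. \<sigma> x = j}"
    and P: "P \<subseteq> N" "P \<inter> (\<Union>j\<in>M. R j) = {}"
    and T_j0: "T j0 \<le> sum f P + sum f (R j0)"
    and T_other: "\<And>j. j \<in> M - {j0} \<Longrightarrow> T j \<le> Z + sum f (R j)"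
  shows "sum T M \<le> (real (card M) - 1) * Z + sum f N"
proof -
  have finite_R: "finite (R j)" if "j \<in> M" for j
    using R[OF that] \<open>finite N\<close> by (auto intro: finite_subset)
  have card_rest: "real (card (M - {j0})) = real (card M) - 1"
    using assms(1,3)
    by (metis card_Diff_singleton card_gt_0_iff empty_iff of_nat_diff One_nat_def Suc_leI of_nat_1)
  have "sum T M = T j0 + sum T (M - {j0})"
    using assms(1,3) by (simp add: sum.remove)
  also have "\<dots> \<le> (sum f P + sum f (R j0)) + (\<Sum>j\<in>M - {j0}. Z + sum f (R j))"
    using T_j0 T_other by (intro add_mono sum_mono) auto
  also have "\<dots> = (real (card M) - 1) * Z + (sum f P + (\<Sum>j\<in>M. sum f (R j)))"
    using assms(1,3) card_rest by (simp add: sum.distrib sum.remove algebra_simps)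
  also have "(\<Sum>j\<in>M. sum f (R j)) = sum f (\<Union>j\<in>M. R j)"
    using R by (intro sum.UNION_disjoint[symmetric] assms(1) ballI finite_R) blast+
  also have "sum f P + sum f (\<Union>j\<in>M. R j) = sum f (P \<union> (\<Union>j\<in>M. R j))"
    using P \<open>finite M\<close> \<open>finite N\<close> finite_R
    by (intro sum.union_disjoint[symmetric]) (auto intro: finite_subset)
  also have "\<dots> \<le> sum f N"
    using P R nonneg \<open>finite N\<close> by (intro sum_mono2) auto
  finally show ?thesis by simp
qed

lemma add_le_three_minus_two_div_mult:
  fixes m t y Z :: real
  assumes "m * t + y \<le> (2 * m - 1) * Z" "2 \<le> m" "y \<le> Z"
  shows "t + y \<le> (3 - 2 / m) * Z"
proof -
  have "(m - 1) * y \<le> (m - 1) * Z"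
    using assms(2,3) by (intro mult_left_mono) auto
  then have "m * (t + y) \<le> (3 * m - 2) * Z"
    using assms(1) by (simp add: algebra_simps)
  then show ?thesis
    using assms(2) by (simp add: field_simps)
qed

lemma proc_nonneg: "0 \<le> tau \<Longrightarrow> 0 \<le> proc tau b a t"
  by (simp add: proc_def max.coboundedI1)

lemma proc_antimono: "0 \<le> a \<Longrightarrow> s \<le> t \<Longrightarrow> proc tau b a t \<le> proc tau b a s"
  by (simp add: proc_def mult_left_mono max.coboundedI2)

lemma proc_delay_averse: "a \<le> 1 \<Longrightarrow> s \<le> t \<Longrightarrow> s + proc tau b a s \<le> t + proc tau b a t"
proof -
  assume "a \<le> 1" "s \<le> t"
  then have "s - a * s \<le> t - a * t"
    using mult_left_mono[of s t "1 - a"] by (simp add: algebra_simps)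
  then show ?thesis using \<open>s \<le> t\<close> by (auto simp: proc_def max_def)
qed

locale delay_averse_game =
  fixes N :: "'j set" and prio :: "'j \<Rightarrow> nat" and p :: "'j \<Rightarrow> real \<Rightarrow> real"
  assumes finite_N: "finite N"
    and bij_prio: "bij_betw prio N {1..card N}"
    and p_nonneg: "\<And>i t. i \<in> N \<Longrightarrow> 0 \<le> p i t"
    and p_antimono: "\<And>i s t. i \<in> N \<Longrightarrow> s \<le> t \<Longrightarrow> p i t \<le> p i s"
    and delay_averse: "\<And>i s t. i \<in> N \<Longrightarrow> s \<le> t \<Longrightarrow> s + p i s \<le> t + p i t"
begin

definition completion :: "('j \<Rightarrow> 'm) \<Rightarrow> 'j \<Rightarrow> real" where
  "completion \<sigma> i = the (map_of (run p 0 (machine_jobs N prio \<sigma> (\<sigma> i))) i)"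

definition prio_list :: "'j list" where
  "prio_list = map (inv_into N prio) [1..<Suc (card N)]"

definition before :: "('j \<Rightarrow> 'm) \<Rightarrow> 'm \<Rightarrow> 'j \<Rightarrow> 'j list" where
  "before \<sigma> j i = filter (\<lambda>x. \<sigma> x = j \<and> prio x < prio i) prio_list"

definition start_on :: "('j \<Rightarrow> 'm) \<Rightarrow> 'm \<Rightarrow> 'j \<Rightarrow> real" where
  "start_on \<sigma> j i = finish p 0 (before \<sigma> j i)"

abbreviation start :: "('j \<Rightarrow> 'm) \<Rightarrow> 'j \<Rightarrow> real" where
  "start \<sigma> i \<equiv> start_on \<sigma> (\<sigma> i) i"

lemma set_prio_list: "set prio_list = N"
proof -
  have "bij_betw (inv_into N prio) {1..card N} N"
    using bij_prio by (rule bij_betw_inv_into)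
  moreover have "set [1..<Suc (card N)] = {1..card N}" by auto
  ultimately show ?thesis by (simp add: prio_list_def bij_betw_def)
qed

lemma sorted_prio_list: "sorted_wrt (\<lambda>x y. prio x < prio y) prio_list"
proof -
  have "prio ` N = {1..card N}" using bij_prio by (simp add: bij_betw_def)
  then have "sorted_wrt (\<lambda>x y. prio (inv_into N prio x) < prio (inv_into N prio y)) [1..<Suc (card N)]"
    by (intro sorted_wrt_mono_rel[OF _ sorted_wrt_upt]) (auto simp: f_inv_into_f)
  then show ?thesis by (simp add: prio_list_def sorted_wrt_map)
qed

lemma set_before: "set (before \<sigma> j i) = {x\<in>N. \<sigma> x = j \<and> prio x < prio i}"
  by (auto simp: before_def set_prio_list)

lemma sorted_before: "sorted_wrt (\<lambda>x y. prio x < prio y) (before \<sigma> j i)"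
  unfolding before_def using sorted_prio_list by (rule sorted_wrt_filter)

lemma start_on_nonneg: "0 \<le> start_on \<sigma> j i"
proof -
  have "0 \<le> t \<Longrightarrow> set xs \<subseteq> N \<Longrightarrow> 0 \<le> finish p t xs" for t xs
    by (induction xs arbitrary: t) (simp_all add: add_nonneg_nonneg p_nonneg)
  then show ?thesis by (simp add: start_on_def set_before)
qed

lemma completion_eq:
  assumes "i \<in> N"
  shows "completion \<sigma> i = start \<sigma> i + p i (start \<sigma> i)"
proof -
  have "machine_jobs N prio \<sigma> (\<sigma> i) = filter (\<lambda>x. \<sigma> x = \<sigma> i) prio_list"
    unfolding machine_jobs_def prio_list_def ..
  also have "\<dots> = before \<sigma> (\<sigma> i) i @ i # filter (\<lambda>x. \<sigma> x = \<sigma> i \<and> prio i < prio x) prio_list"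
    unfolding before_def
    by (rule filter_sorted_split[OF sorted_prio_list]) (use assms set_prio_list in auto)
  finally show ?thesis
    by (simp add: completion_def start_on_def map_of_run_append_Cons set_before)
qed

lemma completion_fun_upd:
  assumes "i \<in> N"
  shows "completion (\<sigma>(i := j)) i = start_on \<sigma> j i + p i (start_on \<sigma> j i)"
proof -
  have "before (\<sigma>(i := j)) j i = before \<sigma> j i"
    unfolding before_def by (rule filter_cong) auto
  then show ?thesis using completion_eq[OF assms, of "\<sigma>(i := j)"] by (simp add: start_on_def)
qed

lemma completion_eq_sum_prefix:
  assumes "i \<in> N"
  shows "completion \<sigma> i = (\<Sum>x\<in>{x\<in>N. \<sigma> x = \<sigma> i \<and> prio x \<le> prio i}. p x (start \<sigma> x))"
proof -
  define xs where "xs = filter (\<lambda>y. \<sigma> y = \<sigma> i \<and> prio y \<le> prio i) prio_list"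
  have "xs = filter (\<lambda>y. (\<sigma> y = \<sigma> i \<and> prio y \<le> prio i) \<and> prio y < prio i) prio_list @ i #
      filter (\<lambda>y. (\<sigma> y = \<sigma> i \<and> prio y \<le> prio i) \<and> prio i < prio y) prio_list"
    unfolding xs_def by (rule filter_sorted_split[OF sorted_prio_list]) (use assms set_prio_list in auto)
  also have "\<dots> = before \<sigma> (\<sigma> i) i @ [i]"
    unfolding before_def by (auto simp: filter_empty_conv intro!: filter_cong)
  finally have xs: "xs = before \<sigma> (\<sigma> i) i @ [i]" .
  have before_eq: "filter (\<lambda>y. prio y < prio x) xs = before \<sigma> (\<sigma> x) x" if "x \<in> set xs" for x
    using that unfolding xs_def before_def filter_filter by (intro filter_cong) auto
  have "completion \<sigma> i = finish p 0 xs"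
    by (simp add: completion_eq[OF assms] xs finish_append start_on_def)
  also have "\<dots> = (\<Sum>x\<in>set xs. p x (finish p 0 (filter (\<lambda>y. prio y < prio x) xs)))"
    using finish_eq_sum[of prio xs p 0] sorted_prio_list by (simp add: xs_def sorted_wrt_filter)
  also have "\<dots> = (\<Sum>x\<in>set xs. p x (start \<sigma> x))"
    by (intro sum.cong) (simp_all add: before_eq start_on_def)
  finally show ?thesis by (simp add: xs_def set_prio_list)
qed

lemma machine_load_le:
  fixes \<sigma> :: "'j \<Rightarrow> 'm"
  assumes Z: "\<And>x. x \<in> N \<Longrightarrow> completion \<sigma> x \<le> Z" and "0 \<le> Z"
  shows "(\<Sum>x\<in>{x\<in>N. \<sigma> x = j}. p x (start \<sigma> x)) \<le> Z"
proof -
  define A where "A = {x\<in>N. \<sigma> x = j}"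
  have "finite A" using finite_N by (simp add: A_def)
  show ?thesis
  proof (cases "A = {}")
    case True
    then show ?thesis using \<open>0 \<le> Z\<close> by (simp only: A_def sum.empty)
  next
    case False
    then obtain i where i: "i \<in> A" "prio i = Max (prio ` A)"
      using Max_in[of "prio ` A"] \<open>finite A\<close> by (metis empty_is_image finite_imageI imageE)
    then have "A = {x\<in>N. \<sigma> x = \<sigma> i \<and> prio x \<le> prio i}"
      using \<open>finite A\<close> by (auto simp: A_def)
    then have "(\<Sum>x\<in>A. p x (start \<sigma> x)) = completion \<sigma> i"
      using i(1) by (simp add: A_def completion_eq_sum_prefix)
    then show ?thesis using Z i(1) by (simp add: A_def)
  qed
qed

lemma sum_proc_le_card_mult:
  fixes \<sigma> :: "'j \<Rightarrow> 'm"
  assumes "finite M" "is_profile N M \<sigma>"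
    and "\<And>x. x \<in> N \<Longrightarrow> completion \<sigma> x \<le> Z" and "0 \<le> Z"
  shows "(\<Sum>x\<in>N. p x (start \<sigma> x)) \<le> real (card M) * Z"
proof -
  have "(\<Sum>x\<in>N. p x (start \<sigma> x)) = (\<Sum>j\<in>M. \<Sum>x\<in>{x\<in>N. \<sigma> x = j}. p x (start \<sigma> x))"
    using assms(1,2) finite_N by (intro sum.group[symmetric]) (auto simp: is_profile_def)
  also have "\<dots> \<le> (\<Sum>j\<in>M. Z)"
    using assms(3,4) by (intro sum_mono machine_load_le)
  finally show ?thesis by simp
qed

lemma start_on_le_cases:
  fixes \<sigma> \<sigma>' :: "'j \<Rightarrow> 'm" and j :: 'm and k :: 'j
  defines "A \<equiv> {x\<in>N. \<sigma> x = j \<and> prio x < prio k}"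
  shows "start_on \<sigma> j k \<le> (\<Sum>x\<in>A. p x (start \<sigma>' x)) \<or>
    (\<exists>g\<in>A. start_on \<sigma> j k \<le> completion \<sigma>' g + (\<Sum>x\<in>{x\<in>A. prio g < prio x}. p x (start \<sigma>' x)))"
proof -
  have "\<And>x. x \<in> set (before \<sigma> j k) \<Longrightarrow> x \<in> N" by (simp add: set_before)
  then have "finish p 0 (before \<sigma> j k) \<le> (\<Sum>x\<in>set (before \<sigma> j k). p x (start \<sigma>' x)) \<or>
    (\<exists>g\<in>set (before \<sigma> j k). finish p 0 (before \<sigma> j k) \<le> start \<sigma>' g + p g (start \<sigma>' g) +
      (\<Sum>x\<in>{x\<in>set (before \<sigma> j k). prio g < prio x}. p x (start \<sigma>' x)))"
    by (intro finish_le_reference_starts sorted_before p_antimono delay_averse) auto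
  then show ?thesis
    by (auto simp: A_def start_on_def[of \<sigma>] set_before completion_eq)
qed

lemma start_on_le_add_sum:
  fixes \<sigma> \<sigma>' :: "'j \<Rightarrow> 'm" and j :: 'm and k :: 'j
  defines "A \<equiv> {x\<in>N. \<sigma> x = j \<and> prio x < prio k}"
  assumes Z: "\<And>x. x \<in> N \<Longrightarrow> completion \<sigma>' x \<le> Z" and "0 \<le> Z"
  shows "start_on \<sigma> j k \<le> Z + (\<Sum>x\<in>A. p x (start \<sigma>' x))"
  using start_on_le_cases[of \<sigma> j k \<sigma>'] unfolding A_def[symmetric]
proof (elim disjE bexE)
  assume "start_on \<sigma> j k \<le> (\<Sum>x\<in>A. p x (start \<sigma>' x))"
  then show ?thesis using \<open>0 \<le> Z\<close> by linarith
next
  fix g assume g: "g \<in> A"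
    and start_le: "start_on \<sigma> j k \<le> completion \<sigma>' g + (\<Sum>x\<in>{x\<in>A. prio g < prio x}. p x (start \<sigma>' x))"
  have "(\<Sum>x\<in>{x\<in>A. prio g < prio x}. p x (start \<sigma>' x)) \<le> (\<Sum>x\<in>A. p x (start \<sigma>' x))"
    using finite_N p_nonneg by (intro sum_mono2) (auto simp: A_def)
  moreover have "completion \<sigma>' g \<le> Z"
    using g Z by (simp add: A_def)
  ultimately show ?thesis using start_le by linarith
qed

lemma sum_start_on_le_if_witnesses:
  fixes \<sigma> \<sigma>' :: "'j \<Rightarrow> 'm" and g :: "'m \<Rightarrow> 'j" and k :: 'j
  defines "A j \<equiv> {x\<in>N. \<sigma> x = j \<and> prio x < prio k}"
  assumes "finite M" "M \<noteq> {}" and Z: "\<And>x. x \<in> N \<Longrightarrow> completion \<sigma>' x \<le> Z"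
    and g: "\<And>j. j \<in> M \<Longrightarrow> g j \<in> A j \<and>
      start_on \<sigma> j k \<le> completion \<sigma>' (g j) + (\<Sum>x\<in>{x\<in>A j. prio (g j) < prio x}. p x (start \<sigma>' x))"
  shows "(\<Sum>j\<in>M. start_on \<sigma> j k) \<le> (real (card M) - 1) * Z + (\<Sum>x\<in>N - {k}. p x (start \<sigma>' x))"
proof -
  define ps where "ps x = p x (start \<sigma>' x)" for x
  obtain j1 where j1: "j1 \<in> M" "\<And>j. j \<in> M \<Longrightarrow> prio (g j1) \<le> prio (g j)"
    using ex_is_arg_min_if_finite[OF assms(2,3), of "\<lambda>j. prio (g j)"]
    by (auto simp: is_arg_min_linorder)
  define P where "P = {x\<in>N. \<sigma>' x = \<sigma>' (g j1) \<and> prio x \<le> prio (g j1)}"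
  have g_j1: "g j1 \<in> N" "prio (g j1) < prio k"
    using g[OF j1(1)] by (auto simp: A_def)
  have "completion \<sigma>' (g j1) = sum ps P"
    unfolding P_def ps_def by (rule completion_eq_sum_prefix[OF g_j1(1)])
  then have "start_on \<sigma> j1 k \<le> sum ps P + sum ps {x\<in>A j1. prio (g j1) < prio x}"
    using g[OF j1(1)] by (simp add: ps_def)
  moreover have "start_on \<sigma> j k \<le> Z + sum ps {x\<in>A j. prio (g j) < prio x}" if "j \<in> M" for j
    using g[OF that] Z by (force simp: A_def ps_def)
  moreover have "P \<inter> (\<Union>j\<in>M. {x\<in>A j. prio (g j) < prio x}) = {}"
    using j1(2) by (fastforce simp: P_def A_def)
  moreover have "P \<subseteq> N - {k}"
    using g_j1 by (auto simp: P_def)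
  ultimately have "(\<Sum>j\<in>M. start_on \<sigma> j k) \<le> (real (card M) - 1) * Z + sum ps (N - {k})"
    using assms(2) finite_N p_nonneg j1(1)
    by (intro sum_le_by_disjoint_bounds[where R = "\<lambda>j. {x\<in>A j. prio (g j) < prio x}"
          and \<sigma> = \<sigma>]) (auto simp: A_def ps_def)
  then show ?thesis by (simp add: ps_def)
qed

lemma sum_start_on_le:
  fixes \<sigma> \<sigma>' :: "'j \<Rightarrow> 'm"
  assumes "finite M" "M \<noteq> {}"
    and Z: "\<And>x. x \<in> N \<Longrightarrow> completion \<sigma>' x \<le> Z" and "0 \<le> Z" and "k \<in> N"
  shows "(\<Sum>j\<in>M. start_on \<sigma> j k) \<le> (real (card M) - 1) * Z + (\<Sum>x\<in>N - {k}. p x (start \<sigma>' x))"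
proof -
  define ps where "ps x = p x (start \<sigma>' x)" for x
  define A where "A j = {x\<in>N. \<sigma> x = j \<and> prio x < prio k}" for j
  show ?thesis
  proof (cases "\<exists>j0\<in>M. start_on \<sigma> j0 k \<le> sum ps (A j0)")
    case True
    then obtain j0 where "j0 \<in> M" "start_on \<sigma> j0 k \<le> sum ps {} + sum ps (A j0)"
      by auto
    then have "(\<Sum>j\<in>M. start_on \<sigma> j k) \<le> (real (card M) - 1) * Z + sum ps (N - {k})"
      using assms(1) finite_N p_nonneg start_on_le_add_sum[OF Z \<open>0 \<le> Z\<close>, of \<sigma>]
      by (intro sum_le_by_disjoint_bounds[where R = A and P = "{}" and \<sigma> = \<sigma>])
        (auto simp: A_def ps_def)
    then show ?thesis by (simp add: ps_def)
  next
    case False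
    have "start_on \<sigma> j k \<le> sum ps (A j) \<or>
      (\<exists>g\<in>A j. start_on \<sigma> j k \<le> completion \<sigma>' g + sum ps {x\<in>A j. prio g < prio x})" for j
      unfolding ps_def A_def by (rule start_on_le_cases)
    then obtain g where g: "\<And>j. j \<in> M \<Longrightarrow> g j \<in> A j \<and>
        start_on \<sigma> j k \<le> completion \<sigma>' (g j) + sum ps {x\<in>A j. prio (g j) < prio x}"
      using False by metis
    show ?thesis
      using sum_start_on_le_if_witnesses[OF assms(1,2) Z, of g \<sigma> k] g
      unfolding A_def ps_def by blast
  qed
qed

lemma NE_completion_le:
  fixes \<sigma> \<sigma>' :: "'j \<Rightarrow> 'm"
  assumes "finite M" "2 \<le> card M"
    and NE: "\<And>j. j \<in> M \<Longrightarrow> completion \<sigma> k \<le> completion (\<sigma>(k := j)) k"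
    and "is_profile N M \<sigma>'" and Z: "\<And>x. x \<in> N \<Longrightarrow> completion \<sigma>' x \<le> Z" and "k \<in> N"
  shows "completion \<sigma> k \<le> (3 - 2 / real (card M)) * Z"
proof -
  define m where "m = real (card M)"
  define T where "T j = start_on \<sigma> j k" for j
  define ps where "ps x = p x (start \<sigma>' x)" for x
  have "M \<noteq> {}" "2 \<le> m" using assms(2) by (auto simp: m_def)
  have ps_k: "start \<sigma>' k + ps k \<le> Z"
    using Z[OF \<open>k \<in> N\<close>] by (simp add: completion_eq[OF \<open>k \<in> N\<close>] ps_def)
  moreover have "0 \<le> start \<sigma>' k" "0 \<le> ps k"
    using start_on_nonneg p_nonneg[OF \<open>k \<in> N\<close>] by (simp_all add: ps_def)
  ultimately have "ps k \<le> Z" "0 \<le> Z" by linarith+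
  obtain j0 where j0: "j0 \<in> M" "\<And>j. j \<in> M \<Longrightarrow> T j0 \<le> T j"
    using ex_is_arg_min_if_finite[OF \<open>finite M\<close> \<open>M \<noteq> {}\<close>, of T]
    by (auto simp: is_arg_min_linorder)
  have C_k: "completion \<sigma> k \<le> T j0 + p k (T j0)"
    using NE[OF j0(1)] by (simp add: completion_fun_upd[OF \<open>k \<in> N\<close>] T_def)
  show ?thesis
  proof (cases "T j0 \<le> start \<sigma>' k")
    case True
    then have "completion \<sigma> k \<le> Z"
      using C_k ps_k delay_averse[OF \<open>k \<in> N\<close>] by (fastforce simp: ps_def)
    also have "Z \<le> (3 - 2 / m) * Z"
      using mult_right_mono[of 1 "3 - 2 / m" Z] \<open>2 \<le> m\<close> \<open>0 \<le> Z\<close> by (simp add: field_simps)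
    finally show ?thesis by (simp add: m_def)
  next
    case False
    then have "p k (T j0) \<le> ps k"
      using p_antimono[OF \<open>k \<in> N\<close>] by (simp add: ps_def)
    have "m * T j0 \<le> (\<Sum>j\<in>M. T j)"
      using sum_bounded_below[of M "T j0" T] j0(2) by (simp add: m_def)
    also have "\<dots> \<le> (m - 1) * Z + sum ps (N - {k})"
      using sum_start_on_le[OF \<open>finite M\<close> \<open>M \<noteq> {}\<close> Z \<open>0 \<le> Z\<close> \<open>k \<in> N\<close>, of \<sigma>]
      by (simp add: T_def ps_def m_def)
    also have "sum ps (N - {k}) = sum ps N - ps k"
      using finite_N \<open>k \<in> N\<close> by (simp add: sum_diff1)
    also have "sum ps N \<le> m * Z"
      using sum_proc_le_card_mult[OF \<open>finite M\<close> \<open>is_profile N M \<sigma>'\<close> Z \<open>0 \<le> Z\<close>]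
      by (simp add: ps_def m_def)
    finally have "m * T j0 + ps k \<le> (2 * m - 1) * Z"
      by (simp add: algebra_simps)
    then have "T j0 + ps k \<le> (3 - 2 / m) * Z"
      using \<open>2 \<le> m\<close> \<open>ps k \<le> Z\<close> by (rule add_le_three_minus_two_div_mult)
    then show ?thesis
      using C_k \<open>p k (T j0) \<le> ps k\<close> by (simp add: m_def)
  qed
qed

end

lemma compl_le_makespan:
  "finite N \<Longrightarrow> i \<in> N \<Longrightarrow> compl N prio tau b a \<sigma> i \<le> makespan N prio tau b a \<sigma>"
  by (simp add: makespan_def)

lemma makespan_leI:
  assumes "finite N" "0 \<le> z" "\<And>i. i \<in> N \<Longrightarrow> compl N prio tau b a \<sigma> i \<le> z"
  shows "makespan N prio tau b a \<sigma> \<le> z"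
  using assms by (simp add: makespan_def)

lemma OPT_greatest:
  assumes "M \<noteq> {}" "\<And>\<sigma>. is_profile N M \<sigma> \<Longrightarrow> x \<le> makespan N prio tau b a \<sigma>"
  shows "x \<le> OPT N M prio tau b a"
proof -
  obtain j where "j \<in> M" using assms(1) by blast
  then have "is_profile N M (\<lambda>_. j)" by (simp add: is_profile_def)
  then show ?thesis
    unfolding OPT_def using assms(2) by (intro cINF_greatest) auto
qed

theorem theorem14:
  fixes N :: "'j set" and M :: "'m set" and prio :: "'j \<Rightarrow> nat"
    and tau b a :: "'j \<Rightarrow> real" and sigma :: "'j \<Rightarrow> 'm"
  assumes "finite N" and "finite M" and "card M \<ge> 2"
    and "bij_betw prio N {1..card N}"
    and "\<And>i. i \<in> N \<Longrightarrow> tau i > 0"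
    and "\<And>i. i \<in> N \<Longrightarrow> b i \<ge> 0"
    and "\<And>i. i \<in> N \<Longrightarrow> 0 \<le> a i \<and> a i \<le> 1"
    and "is_NE N M prio tau b a sigma"
  shows "makespan N prio tau b a sigma \<le> (3 - 2 / real (card M)) * OPT N M prio tau b a"
proof -
  interpret delay_averse_game N prio "\<lambda>i. proc (tau i) (b i) (a i)"
    using assms(1,4) by unfold_locales
      (simp_all add: assms(5)[THEN less_imp_le] proc_nonneg proc_antimono proc_delay_averse assms(7))
  have compl_eq: "compl N prio tau b a = completion"
    by (simp add: fun_eq_iff compl_def completion_def)
  define c where "c = 3 - 2 / real (card M)"
  have "0 < c" using assms(3) by (simp add: c_def field_simps)
  have "makespan N prio tau b a sigma \<le> c * makespan N prio tau b a \<sigma>'"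
    if "is_profile N M \<sigma>'" for \<sigma>'
  proof (rule makespan_leI)
    show "0 \<le> c * makespan N prio tau b a \<sigma>'"
      using \<open>0 < c\<close> assms(1) by (simp add: makespan_def)
    show "compl N prio tau b a sigma k \<le> c * makespan N prio tau b a \<sigma>'" if "k \<in> N" for k
      using assms(8) \<open>is_profile N M \<sigma>'\<close> compl_le_makespan[OF assms(1), of _ prio tau b a \<sigma>'] that
      unfolding c_def compl_eq is_NE_def
      by (intro NE_completion_le[OF assms(2,3)]) auto
  qed (rule assms(1))
  then have "makespan N prio tau b a sigma / c \<le> OPT N M prio tau b a"
    using assms(3) \<open>0 < c\<close> by (intro OPT_greatest) (auto simp: field_simps)
  then show ?thesis
    using \<open>0 < c\<close> by (simp add: c_def field_simps)
qed

end
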